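(* Let $C_k=\frac{1}{k+1}\binom{2k}{k}$ and let $S_n=\sum_{k=0}^n\binom{n+k}{2k}C_k$ (the large Schroeder numbers), and let $s_n$ be the little Schroeder numbers, defined by $\sum_{n\ge0}s_nx^n=\frac{1+x-\sqrt{1-6x+x^2}}{4x}$. Then $(S_n)_{n\ge0}$ is the moment sequence of the family of orthogonal polynomials whose coefficient array is the Riordan array $\left(\frac{1}{1+2x},\frac{x}{1+3x+2x^2}\right)$, and $(s_n)_{n\ge0}$ is the moment sequence of the family of orthogonal polynomials whose coefficient array is the Riordan array $\left(\frac{1}{1+x},\frac{x}{1+3x+2x^2}\right)$.
   Context: For power series $g(x)=g_0+g_1x+\cdots$ with $g_0\neq0$ and $f(x)=f_1x+f_2x^2+\cdots$, the Riordan array $(g,f)$ is the infinite lower-triangular matrix $T$ with entries $T_{n,k}=[x^n]\,g(x)f(x)^k$, where $[x^n]$ extracts the coefficient of $x^n$. A Riordan array $T$ is the coefficient array of the family of polynomials $P_n(x)=\sum_{k=0}^nT_{n,k}x^k$ ($n\ge0$). Saying that a sequence $(\mu_n)$ is the moment sequence of this (monic) family of orthogonal polynomials means: the linear functional $L$ on polynomials with $L(x^n)=\mu_n$ satisfies $L(P_mP_n)=0$ for $m\neq n$ and $L(P_n^2)\neq0$; equivalently, $(\mu_n)$ is the first column of the inverse matrix $T^{-1}$. *)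

theory Defs
  imports "HOL-Computational_Algebra.Computational_Algebra"
begin

definition catalan :: "nat \<Rightarrow> real" where
  "catalan k = real ((2*k) choose k) / real (k + 1)"

definition large_schroeder :: "nat \<Rightarrow> real" where
  "large_schroeder n = (\<Sum>k=0..n. real ((n + k) choose (2*k)) * catalan k)"

text \<open>Little Schroeder numbers: coefficients of (1 + x - sqrt(1 - 6x + x^2)) / (4x),
  where sqrt is the power-series square root with constant term 1, and division by x
  is the shift (the numerator has constant term 0).\<close>
definition little_schroeder_gf :: "real fps" where
  "little_schroeder_gf =
     fps_const (1/4) * fps_shift 1
       (1 + fps_X - fps_radical (\<lambda>_ _. 1) 2 (1 - 6 * fps_X + fps_X ^ 2))"

definition little_schroeder :: "nat \<Rightarrow> real" where
  "little_schroeder n = little_schroeder_gf $ n"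

definition riordan :: "real fps \<Rightarrow> real fps \<Rightarrow> nat \<Rightarrow> nat \<Rightarrow> real" where
  "riordan g f n k = (g * f ^ k) $ n"

definition coeff_array_poly :: "(nat \<Rightarrow> nat \<Rightarrow> real) \<Rightarrow> nat \<Rightarrow> real poly" where
  "coeff_array_poly T n = (\<Sum>k\<le>n. monom (T n k) k)"

definition moment_functional :: "(nat \<Rightarrow> real) \<Rightarrow> real poly \<Rightarrow> real" where
  "moment_functional mu p = (\<Sum>i\<le>degree p. coeff p i * mu i)"

definition is_moment_sequence :: "(nat \<Rightarrow> real) \<Rightarrow> (nat \<Rightarrow> real poly) \<Rightarrow> bool" where
  "is_moment_sequence mu P \<longleftrightarrow>
     (\<forall>m n. m \<noteq> n \<longrightarrow> moment_functional mu (P m * P n) = 0) \<and>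
     (\<forall>n. moment_functional mu (P n * P n) \<noteq> 0)"

end

theory Submission
  imports Defs
begin

text \<open>Both Riordan arrays have the form \<open>(g, x/D)\<close> with \<open>D = 1 + 3x + 2x^2\<close> and \<open>g D\<close>
  of degree at most one. Multiplying the column series \<open>g (x/D)^k\<close> by \<open>D\<close> shows that the
  row polynomials satisfy the three-term recurrence \<open>x P(n+1) = P(n+2) + 3 P(n+1) + 2 P(n)\<close>,
  and the fundamental theorem of Riordan arrays gives \<open>L(P(n)) = [x^n] g M(x/D)\<close>, where \<open>M\<close>
  is the generating function of the moments. If \<open>g M(x/D) = 1\<close>, then \<open>L(P(n))\<close> vanishes for
  \<open>n > 0\<close>, the recurrence yields \<open>L(x^j P(n)) = 0\<close> for \<open>j < n\<close> and \<open>L(x^n P(n)) = 2^n\<close>,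
  and orthogonality follows.

  For the moments: the large Schroeder series \<open>S = C(x/(1-x)^2)/(1-x)\<close>, with \<open>C\<close> the
  Catalan series, satisfies \<open>S = 1 + xS + xS^2\<close>. After substituting \<open>x/D\<close> this quadratic
  equation has a unique solution, which is \<open>1 + 2x\<close>; the little Schroeder series is
  \<open>(1 + S)/2\<close> and so becomes \<open>1 + x\<close>. These are exactly the inverses of the two \<open>g\<close>.\<close>

lemma moment_functional_eq_sum:
  assumes "degree p \<le> N"
  shows "moment_functional mu p = (\<Sum>i\<le>N. coeff p i * mu i)"
  unfolding moment_functional_def
  by (rule sum.mono_neutral_left) (use assms in \<open>auto simp: coeff_eq_0\<close>)

lemma moment_functional_add:
  "moment_functional mu (p + q) = moment_functional mu p + moment_functional mu q"
proof -
  define N where "N = max (degree p) (degree q)"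
  have "degree (p + q) \<le> N" "degree p \<le> N" "degree q \<le> N"
    unfolding N_def by (auto intro: degree_add_le)
  then show ?thesis
    by (simp add: moment_functional_eq_sum[of _ N] sum.distrib algebra_simps)
qed

lemma moment_functional_smult:
  "moment_functional mu (smult c p) = c * moment_functional mu p"
  using moment_functional_eq_sum[OF degree_smult_le, of mu c p]
  by (simp add: moment_functional_def sum_distrib_left algebra_simps)

lemma moment_functional_sum:
  "moment_functional mu (\<Sum>k\<in>A. p k) = (\<Sum>k\<in>A. moment_functional mu (p k))"
  by (induction A rule: infinite_finite_induct)
    (simp_all add: moment_functional_add moment_functional_def[of _ 0])

lemma three_term_recurrence_imp_moment_sequence:
  fixes P :: "nat \<Rightarrow> real poly" and mu \<beta> \<gamma> :: "nat \<Rightarrow> real"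
  assumes degree: "\<And>n. degree (P n) \<le> n"
    and lead: "\<And>n. coeff (P n) n \<noteq> 0"
    and rec: "\<And>n. [:0, 1:] * P (Suc n) = P (Suc (Suc n)) + smult (\<beta> n) (P (Suc n)) + smult (\<gamma> n) (P n)"
    and \<gamma>: "\<And>n. \<gamma> n \<noteq> 0"
    and moments: "\<And>n. moment_functional mu (P n) = (if n = 0 then 1 else 0)"
  shows "is_moment_sequence mu P"
proof -
  let ?L = "moment_functional mu"
  have power_Suc_mult: "[:0, 1:] ^ Suc j * p = [:0, 1:] ^ j * ([:0, 1:] * p)" for j and p :: "real poly"
    by (simp only: power_Suc2 mult.assoc)
  have shift: "?L ([:0, 1:] ^ j * ([:0, 1:] * P (Suc n))) =
      ?L ([:0, 1:] ^ j * P (Suc (Suc n))) + \<beta> n * ?L ([:0, 1:] ^ j * P (Suc n))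
      + \<gamma> n * ?L ([:0, 1:] ^ j * P n)" for j n
    by (simp only: rec distrib_left mult_smult_right moment_functional_add moment_functional_smult)
  have below: "?L ([:0, 1:] ^ j * P n) = 0" if "j < n" for j n
    using that
  proof (induction j arbitrary: n)
    case 0
    then show ?case using moments by simp
  next
    case (Suc j)
    then obtain m where "n = Suc (Suc m)" and "j < Suc m"
      by (metis Suc_lessE less_Suc_eq)
    then show ?case
      using shift[of j "Suc m"] Suc.IH by (simp only: power_Suc_mult)
  qed
  have diagonal: "?L ([:0, 1:] ^ n * P n) = (\<Prod>i<n. \<gamma> i)" for n
  proof (induction n)
    case 0
    then show ?case using moments by simp
  next
    case (Suc n)
    then show ?case
      using shift[of n n] below[of n "Suc n"] below[of n "Suc (Suc n)"]
      by (simp only: power_Suc_mult) simp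
  qed
  have expand: "?L (P k * P n) = (\<Sum>i\<le>k. coeff (P k) i * ?L ([:0, 1:] ^ i * P n))" for k n
  proof -
    have "P k * P n = (\<Sum>i\<le>k. smult (coeff (P k) i) ([:0, 1:] ^ i * P n))"
      by (subst (1) poly_as_sum_of_monoms'[OF degree, symmetric])
        (simp add: monom_altdef sum_distrib_right)
    then show ?thesis
      by (simp add: moment_functional_sum moment_functional_smult)
  qed
  have orthogonal: "?L (P k * P n) = 0" if "k < n" for k n
    using that by (simp add: expand below)
  show ?thesis
    unfolding is_moment_sequence_def
  proof (intro conjI allI impI)
    fix m n :: nat
    assume "m \<noteq> n"
    then show "?L (P m * P n) = 0"
      by (metis linorder_neqE_nat mult.commute orthogonal)
  next
    fix n
    have "?L (P n * P n) = (\<Sum>i\<le>n. if i = n then coeff (P n) n * (\<Prod>i<n. \<gamma> i) else 0)"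
      unfolding expand by (intro sum.cong refl) (auto simp: below diagonal)
    then show "?L (P n * P n) \<noteq> 0"
      using lead \<gamma> by (simp add: prod_zero_iff)
  qed
qed

lemma fps_mult_compose_nth:
  fixes a b h :: "'a::comm_ring_1 fps"
  assumes "b $ 0 = 0"
  shows "(h * (a oo b)) $ n = (\<Sum>k=0..n. a $ k * (h * b ^ k) $ n)"
proof -
  have compose_nth: "(a oo b) $ m = (\<Sum>k=0..n. a $ k * (b ^ k) $ m)" if "m \<le> n" for m
    unfolding fps_compose_nth using that
    by (intro sum.mono_neutral_left) (auto simp: startsby_zero_power_prefix[OF assms])
  have "(h * (a oo b)) $ n = (\<Sum>i=0..n. \<Sum>k=0..n. a $ k * (h $ i * (b ^ k) $ (n - i)))"
    by (simp add: fps_mult_nth compose_nth sum_distrib_left algebra_simps)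
  also have "\<dots> = (\<Sum>k=0..n. a $ k * (h * b ^ k) $ n)"
    by (subst sum.swap) (simp add: fps_mult_nth sum_distrib_left)
  finally show ?thesis .
qed

lemma riordan_eq_0_if_less:
  assumes "f $ 0 = 0" and "n < k"
  shows "riordan g f n k = 0"
  unfolding riordan_def fps_mult_nth
  using assms startsby_zero_power_prefix[of f k] by (intro sum.neutral) auto

lemma riordan_diagonal:
  assumes "f $ 0 = 0"
  shows "riordan g f n n = g $ 0 * (f $ 1) ^ n"
proof -
  have "riordan g f n n = (\<Sum>i=0..n. if i = 0 then g $ 0 * (f ^ n) $ n else 0)"
    unfolding riordan_def fps_mult_nth
    using startsby_zero_power_prefix[OF assms, of n] by (intro sum.cong refl) auto
  then show ?thesis
    by (simp add: startsby_zero_power_nth_same[OF assms])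
qed

lemma degree_coeff_array_poly: "degree (coeff_array_poly T n) \<le> n"
  unfolding coeff_array_poly_def
  by (intro degree_sum_le) (auto intro: order.trans[OF degree_monom_le])

lemma coeff_coeff_array_poly:
  assumes "\<And>k. n < k \<Longrightarrow> T n k = 0"
  shows "coeff (coeff_array_poly T n) k = T n k"
  using assms by (cases "k \<le> n") (auto simp: coeff_array_poly_def coeff_sum coeff_monom)

lemma moment_functional_riordan:
  assumes "f $ 0 = 0"
  shows "moment_functional mu (coeff_array_poly (riordan g f) n) = (g * (Abs_fps mu oo f)) $ n"
proof -
  have "coeff (coeff_array_poly (riordan g f) n) k = (g * f ^ k) $ n" for k
    using assms by (simp add: coeff_coeff_array_poly riordan_eq_0_if_less) (simp add: riordan_def)
  then show ?thesis
    by (simp add: moment_functional_eq_sum[OF degree_coeff_array_poly] fps_mult_compose_nth[OF assms]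
        atMost_atLeast0 mult.commute)
qed

lemma riordan_quadratic_denominator_recurrence:
  fixes a b c :: real and g D :: "real fps"
  assumes D: "D = 1 + fps_const a * fps_X + fps_const b * fps_X ^ 2"
    and g: "g * D = 1 + fps_const c * fps_X"
  defines "T \<equiv> riordan g (fps_X * inverse D)"
  shows "T (Suc (Suc n)) k + a * T (Suc n) k + b * T n k = (if k = 0 then 0 else T (Suc n) (k - 1))"
proof -
  have D_mult_nth: "(D * h) $ Suc (Suc n) = h $ Suc (Suc n) + a * h $ Suc n + b * h $ n" for h
    by (simp add: D distrib_right mult.assoc fps_X_power_mult_nth)
  have "D * inverse D = 1"
    by (rule inverse_mult_eq_1') (simp add: D)
  then have column: "D * (g * (fps_X * inverse D) ^ k) =
      (if k = 0 then 1 + fps_const c * fps_X else fps_X * (g * (fps_X * inverse D) ^ (k - 1)))"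
    using g by (cases k) (simp_all add: algebra_simps)
  show ?thesis
    using arg_cong[OF column, of "\<lambda>h. h $ Suc (Suc n)"]
    by (simp add: D_mult_nth T_def riordan_def split: if_splits)
qed

lemma coeff_array_poly_quadratic_denominator_recurrence:
  fixes a b c :: real and g D :: "real fps"
  assumes D: "D = 1 + fps_const a * fps_X + fps_const b * fps_X ^ 2"
    and g: "g * D = 1 + fps_const c * fps_X"
  defines "P \<equiv> coeff_array_poly (riordan g (fps_X * inverse D))"
  shows "[:0, 1:] * P (Suc n) = P (Suc (Suc n)) + smult a (P (Suc n)) + smult b (P n)"
proof (rule poly_eqI)
  fix k
  have coeff_P: "coeff (P m) k = riordan g (fps_X * inverse D) m k" for m k
    unfolding P_def by (rule coeff_coeff_array_poly) (simp add: riordan_eq_0_if_less)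
  show "coeff ([:0, 1:] * P (Suc n)) k = coeff (P (Suc (Suc n)) + smult a (P (Suc n)) + smult b (P n)) k"
    using riordan_quadratic_denominator_recurrence[OF D g, of n k]
    by (cases k) (simp_all add: coeff_P coeff_pCons)
qed

lemma riordan_quadratic_denominator_moment_sequence:
  fixes a b c :: real and g D :: "real fps" and mu :: "nat \<Rightarrow> real"
  assumes D: "D = 1 + fps_const a * fps_X + fps_const b * fps_X ^ 2" and "b \<noteq> 0"
    and g: "g * D = 1 + fps_const c * fps_X"
    and mu: "g * (Abs_fps mu oo fps_X * inverse D) = 1"
  shows "is_moment_sequence mu (coeff_array_poly (riordan g (fps_X * inverse D)))"
proof (rule three_term_recurrence_imp_moment_sequence)
  let ?f = "fps_X * inverse D" and ?P = "coeff_array_poly (riordan g (fps_X * inverse D))"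
  have f0: "?f $ 0 = 0" by simp
  have "g $ 0 = 1"
    using arg_cong[OF g, of "\<lambda>h. h $ 0"] by (simp add: D)
  moreover have "?f $ 1 = 1"
    by (simp add: D)
  ultimately show "coeff (?P n) n \<noteq> 0" for n
    by (simp add: coeff_coeff_array_poly riordan_eq_0_if_less riordan_diagonal)
  show "degree (?P n) \<le> n" for n
    by (rule degree_coeff_array_poly)
  show "[:0, 1:] * ?P (Suc n) = ?P (Suc (Suc n)) + smult a (?P (Suc n)) + smult b (?P n)" for n
    by (rule coeff_array_poly_quadratic_denominator_recurrence[OF D g])
  show "b \<noteq> 0" by fact
  show "moment_functional mu (?P n) = (if n = 0 then 1 else 0)" for n
    by (simp add: moment_functional_riordan[OF f0] mu)
qed

lemma central_binomial_Suc:
  "(Suc (Suc (2 * k)) choose Suc k) * Suc k = 2 * (2 * k + 1) * (2 * k choose k)"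
proof -
  have "(Suc (Suc (2 * k)) choose Suc k) * Suc k = Suc (Suc (2 * k)) * (Suc (2 * k) choose k)"
    using Suc_times_binomial[of k "Suc (2 * k)"] by (simp only: mult.commute)
  also have "Suc (2 * k) choose k = Suc (2 * k) choose Suc k"
    using binomial_symmetric[of k "Suc (2 * k)"] by simp
  also have "Suc (Suc (2 * k)) * \<dots> = 2 * (Suc (2 * k) * (2 * k choose k))"
    using Suc_times_binomial_eq[of "2 * k" k] by simp
  finally show ?thesis by simp
qed

lemma catalan_Suc: "catalan (Suc k) * (real k + 2) = 2 * (2 * real k + 1) * catalan k"
  using arg_cong[OF central_binomial_Suc[of k], of real]
  by (simp add: catalan_def field_simps del: binomial_Suc_Suc)

lemma gbinomial_half_Suc:
  "((1/2 :: real) gchoose Suc k) * (-4) ^ Suc k = -2 * catalan k"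
proof (induction k)
  case 0
  then show ?case by (simp add: catalan_def)
next
  case (Suc k)
  have ratio: "(real k + 2) * ((1/2 :: real) gchoose Suc (Suc k)) = (1/2 - real (Suc k)) * ((1/2) gchoose Suc k)"
    using gbinomial_absorption[of "Suc k" "1/2 :: real"] gbinomial_absorb_comp[of "1/2 :: real" "Suc k"]
    by (simp add: add.commute)
  have "(real k + 2) * (((1/2 :: real) gchoose Suc (Suc k)) * (-4) ^ Suc (Suc k))
      = -4 * ((real k + 2) * ((1/2) gchoose Suc (Suc k))) * (-4) ^ Suc k"
    by (simp add: algebra_simps)
  also have "\<dots> = -4 * (1/2 - real (Suc k)) * (((1/2) gchoose Suc k) * (-4) ^ Suc k)"
    unfolding ratio by (simp add: algebra_simps)
  also have "\<dots> = -4 * (1/2 - real (Suc k)) * (-2 * catalan k)"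
    by (simp only: Suc.IH)
  also have "\<dots> = (real k + 2) * (-2 * catalan (Suc k))"
    using catalan_Suc[of k] by (simp add: algebra_simps)
  finally show ?case
    by (rule mult_left_cancel[THEN iffD1, rotated]) simp
qed

lemma catalan_fps_equation: "Abs_fps catalan = 1 + fps_X * Abs_fps catalan ^ 2"
proof -
  define C where "C = Abs_fps catalan"
  define Q :: "real fps" where "Q = fps_binomial (1/2) oo (fps_const (-4) * fps_X)"
  have "Q ^ 2 = fps_binomial 1 oo (fps_const (-4) * fps_X)"
    unfolding Q_def by (simp add: fps_compose_power fps_binomial_power)
  also have "\<dots> = 1 - 4 * fps_X"
    by (simp add: fps_binomial_1 fps_compose_add_distrib numeral_fps_const flip: fps_const_neg)
  finally have Q_square: "Q ^ 2 = 1 - 4 * fps_X" .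
  have "Q = 1 - 2 * fps_X * C"
  proof (rule fps_ext)
    fix n
    show "Q $ n = (1 - 2 * fps_X * C) $ n"
      using gbinomial_half_Suc by (cases n) (simp_all add: Q_def C_def numeral_fps_const mult.assoc)
  qed
  with Q_square have "fps_const 4 * fps_X * (1 + fps_X * C ^ 2 - C) = 0"
    by (simp add: power2_eq_square algebra_simps numeral_fps_const)
  then show ?thesis
    unfolding C_def by simp
qed

lemma inverse_one_minus_fps_X_power_nth:
  "(inverse (1 - fps_X) ^ Suc r :: 'a::field fps) $ m = of_nat ((m + r) choose r)"
proof (induction r arbitrary: m)
  case 0
  then show ?case by (simp add: fps_inverse_one_minus_fps_X)
next
  case (Suc r)
  have hockey_stick: "(\<Sum>j\<le>m. (j + r) choose r) = (m + Suc r) choose Suc r"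
    by (induction m) simp_all
  have "(inverse (1 - fps_X) ^ Suc (Suc r) :: 'a fps) $ m = (\<Sum>i=0..m. (inverse (1 - fps_X) ^ Suc r :: 'a fps) $ (m - i))"
    by (simp add: fps_mult_nth fps_inverse_one_minus_fps_X)
  also have "\<dots> = (\<Sum>j\<le>m. of_nat ((j + r) choose r))"
    unfolding Suc.IH atMost_atLeast0
    by (rule sum.reindex_bij_witness[of _ "\<lambda>j. m - j" "\<lambda>j. m - j"]) auto
  also have "\<dots> = of_nat ((m + Suc r) choose Suc r)"
    by (simp only: of_nat_sum[symmetric] hockey_stick)
  finally show ?case .
qed

lemma large_schroeder_fps_eq_compose_catalan:
  "Abs_fps large_schroeder = inverse (1 - fps_X) * (Abs_fps catalan oo fps_X * inverse (1 - fps_X) ^ 2)"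
proof (rule fps_ext)
  fix n
  let ?I = "inverse (1 - fps_X) :: real fps"
  have "(?I * (fps_X * ?I ^ 2) ^ k) $ n = real ((n + k) choose (2 * k))" if "k \<le> n" for k
  proof -
    have "?I * (fps_X * ?I ^ 2) ^ k = fps_X ^ k * ?I ^ Suc (2 * k)"
      by (simp add: power_mult_distrib power_mult[symmetric] algebra_simps)
    then have "(?I * (fps_X * ?I ^ 2) ^ k) $ n = (fps_X ^ k * ?I ^ Suc (2 * k)) $ n"
      by (simp only:)
    also have "\<dots> = (?I ^ Suc (2 * k)) $ (n - k)"
      using that by (simp only: fps_X_power_mult_nth) simp
    also have "\<dots> = real ((n - k + 2 * k) choose (2 * k))"
      by (rule inverse_one_minus_fps_X_power_nth)
    also have "n - k + 2 * k = n + k"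
      using that by simp
    finally show ?thesis .
  qed
  then show "Abs_fps large_schroeder $ n = (?I * (Abs_fps catalan oo fps_X * ?I ^ 2)) $ n"
    by (simp add: fps_mult_compose_nth large_schroeder_def mult.commute)
qed

lemma fps_quadratic_equation_unique:
  fixes f Y Z :: "'a::idom fps"
  assumes f0: "f $ 0 = 0"
    and Y: "Y = 1 + f * Y + f * Y ^ 2" and Z: "Z = 1 + f * Z + f * Z ^ 2"
  shows "Y = Z"
proof (rule ccontr)
  assume "Y \<noteq> Z"
  have "f * (Y - Z) * (1 + Y + Z) = (1 + f * Y + f * Y ^ 2) - (1 + f * Z + f * Z ^ 2)"
    by (simp add: power2_eq_square algebra_simps)
  also have "\<dots> = Y - Z"
    by (simp only: Y[symmetric] Z[symmetric])
  finally have factor: "Y - Z = f * (Y - Z) * (1 + Y + Z)" ..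
  with \<open>Y \<noteq> Z\<close> have "f \<noteq> 0" and "1 + Y + Z \<noteq> 0"
    by auto
  with \<open>Y \<noteq> Z\<close> have "subdegree (Y - Z) = subdegree f + subdegree (Y - Z) + subdegree (1 + Y + Z)"
    using arg_cong[OF factor, of subdegree] by simp
  moreover have "subdegree f \<noteq> 0"
    using f0 \<open>f \<noteq> 0\<close> by (simp add: subdegree_eq_0_iff)
  ultimately show False
    by linarith
qed

lemma large_schroeder_fps_equation:
  defines "S \<equiv> Abs_fps large_schroeder"
  shows "S = 1 + fps_X * S + fps_X * S ^ 2"
proof -
  let ?I = "inverse (1 - fps_X) :: real fps"
  define Y where "Y = fps_X * ?I ^ 2"
  define A where "A = Abs_fps catalan oo Y"
  have Y0: "Y $ 0 = 0"
    by (simp add: Y_def)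
  have "A = (1 + fps_X * Abs_fps catalan ^ 2) oo Y"
    unfolding A_def by (subst catalan_fps_equation) (rule refl)
  also have "\<dots> = 1 + Y * A ^ 2"
    by (simp add: A_def Y0 fps_compose_add_distrib fps_compose_mult_distrib fps_compose_power)
  finally have A_equation: "A = 1 + Y * A ^ 2" .
  have S_eq: "S = ?I * A"
    unfolding S_def A_def Y_def by (rule large_schroeder_fps_eq_compose_catalan)
  have "(1 - fps_X) * ?I = 1"
    by (rule inverse_mult_eq_1') simp
  then have "(1 - fps_X) * S = A"
    by (simp add: S_eq mult.assoc[symmetric])
  moreover have "fps_X * S ^ 2 = Y * A ^ 2"
    by (simp add: S_eq Y_def power_mult_distrib mult_ac)
  ultimately have "(1 - fps_X) * S - fps_X * S ^ 2 = 1"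
    using A_equation by (metis add_diff_cancel_right')
  then show ?thesis
    by (simp add: algebra_simps)
qed

lemma little_schroeder_gf_eq_large:
  "little_schroeder_gf = fps_const (1/2) * (1 + Abs_fps large_schroeder)"
proof -
  define S where "S = Abs_fps large_schroeder"
  define R where "R = 1 - fps_X - 2 * fps_X * S"
  have "R ^ 2 = (1 - fps_X) ^ 2 - 4 * fps_X * (S - fps_X * S - fps_X * S ^ 2)"
    unfolding R_def by (simp add: power2_eq_square algebra_simps)
  also have "S - fps_X * S - fps_X * S ^ 2 = 1"
    using large_schroeder_fps_equation unfolding S_def by (simp add: algebra_simps)
  finally have "R ^ Suc 1 = 1 - 6 * fps_X + fps_X ^ 2"
    by (simp add: power2_eq_square algebra_simps)
  then have "fps_radical (\<lambda>_ _. 1) 2 (1 - 6 * fps_X + fps_X ^ 2) = R"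
    using radical_unique[of "\<lambda>_ _. 1" 1 "1 - 6 * fps_X + fps_X ^ 2" R]
    by (simp add: R_def numeral_2_eq_2)
  moreover have "fps_shift 1 (1 + fps_X - R) = 2 * (1 + S)"
  proof -
    have "1 + fps_X - R = 2 * (1 + S) * fps_X"
      unfolding R_def by (simp add: algebra_simps)
    then show ?thesis
      by (simp only: fps_shift_times_fps_X')
  qed
  moreover have "fps_const (1/4) * 2 = (fps_const (1/2) :: real fps)"
    by (simp add: numeral_fps_const flip: fps_const_mult)
  ultimately show ?thesis
    unfolding little_schroeder_gf_def S_def by (simp only: mult.assoc[symmetric])
qed

lemma large_schroeder_fps_compose:
  "Abs_fps large_schroeder oo fps_X * inverse (1 + 3 * fps_X + 2 * fps_X ^ 2) = 1 + 2 * fps_X"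
proof (rule fps_quadratic_equation_unique)
  let ?D = "1 + 3 * fps_X + 2 * fps_X ^ 2 :: real fps"
  let ?f = "fps_X * inverse ?D" and ?S = "Abs_fps large_schroeder"
  show f0: "?f $ 0 = 0"
    by simp
  show "?S oo ?f = 1 + ?f * (?S oo ?f) + ?f * (?S oo ?f) ^ 2"
    by (subst (1) large_schroeder_fps_equation)
      (simp add: f0 fps_compose_add_distrib fps_compose_mult_distrib fps_compose_power)
  have "?f * (2 * ?D) = 2 * fps_X * (?D * inverse ?D)"
    by (simp only: mult_ac)
  also have "?D * inverse ?D = 1"
    by (rule inverse_mult_eq_1') simp
  finally have "?f * (2 * ?D) = 2 * fps_X"
    by simp
  then show "1 + 2 * fps_X = 1 + ?f * (1 + 2 * fps_X) + ?f * (1 + 2 * fps_X) ^ 2"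
    by (simp add: power2_eq_square algebra_simps)
qed

lemma little_schroeder_fps_compose:
  "Abs_fps little_schroeder oo fps_X * inverse (1 + 3 * fps_X + 2 * fps_X ^ 2) = 1 + fps_X"
proof -
  let ?f = "fps_X * inverse (1 + 3 * fps_X + 2 * fps_X ^ 2) :: real fps"
  have "Abs_fps little_schroeder = fps_const (1/2) * (1 + Abs_fps large_schroeder)"
    by (subst little_schroeder_gf_eq_large[symmetric]) (simp add: fps_eq_iff little_schroeder_def)
  then have "Abs_fps little_schroeder oo ?f = fps_const (1/2) * (1 + (Abs_fps large_schroeder oo ?f))"
    by (simp only: fps_const_mult_apply_left[symmetric] fps_compose_add_distrib fps_compose_1)
  also have "\<dots> = fps_const (1/2) * fps_const 2 * (1 + fps_X)"
    unfolding large_schroeder_fps_compose by (simp add: algebra_simps numeral_fps_const)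
  finally show ?thesis
    by (simp flip: fps_const_mult)
qed

theorem mainTheorem1:
  shows "is_moment_sequence large_schroeder
           (coeff_array_poly (riordan (inverse (1 + 2 * fps_X))
              (fps_X * inverse (1 + 3 * fps_X + 2 * fps_X ^ 2))))
       \<and> is_moment_sequence little_schroeder
           (coeff_array_poly (riordan (inverse (1 + fps_X))
              (fps_X * inverse (1 + 3 * fps_X + 2 * fps_X ^ 2))))"
proof
  let ?D = "1 + 3 * fps_X + 2 * fps_X ^ 2 :: real fps"
  have D: "?D = 1 + fps_const 3 * fps_X + fps_const 2 * fps_X ^ 2"
    by (simp add: numeral_fps_const)
  have D_factor: "?D = (1 + fps_X) * (1 + 2 * fps_X)"
    by (simp add: power2_eq_square algebra_simps)
  have inverse1: "inverse (1 + fps_X) * (1 + fps_X :: real fps) = 1"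
    and inverse2: "inverse (1 + 2 * fps_X) * (1 + 2 * fps_X :: real fps) = 1"
    by (simp_all add: inverse_mult_eq_1)
  show "is_moment_sequence large_schroeder (coeff_array_poly (riordan (inverse (1 + 2 * fps_X)) (fps_X * inverse ?D)))"
  proof (rule riordan_quadratic_denominator_moment_sequence[OF D])
    have "inverse (1 + 2 * fps_X) * ?D = (1 + fps_X) * (inverse (1 + 2 * fps_X) * (1 + 2 * fps_X))"
      unfolding D_factor by (simp only: mult_ac)
    then show "inverse (1 + 2 * fps_X) * ?D = 1 + fps_const 1 * fps_X"
      by (simp add: inverse2)
  qed (simp_all add: large_schroeder_fps_compose inverse2)
  show "is_moment_sequence little_schroeder (coeff_array_poly (riordan (inverse (1 + fps_X)) (fps_X * inverse ?D)))"
  proof (rule riordan_quadratic_denominator_moment_sequence[OF D])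
    have "inverse (1 + fps_X) * ?D = (1 + 2 * fps_X) * (inverse (1 + fps_X) * (1 + fps_X))"
      unfolding D_factor by (simp only: mult_ac)
    then show "inverse (1 + fps_X) * ?D = 1 + fps_const 2 * fps_X"
      by (simp add: inverse1 numeral_fps_const)
  qed (simp_all add: little_schroeder_fps_compose inverse1)
qed

end
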